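(* Let $\rho=\rho_0$ and let $R=\sum_{m,n\ge 0}\frac1{n!}\binom{\psi}{m}\phi^n\otimes(a-1)^mb^n$. Then $\rho^{\otimes2}(R)$ is a well-defined element of $\operatorname{End}(A^1)^{\otimes 2}[[\hbar]]$, and the operator $r:=\rho^{\otimes2}(R)P$, where $P$ exchanges the two arguments of a function of $(z_0,z_1)$, acts on $A^2[[\hbar]]$ by $$(rf)(z_0,z_1)=f\Big(z_1+\frac{\hbar}{1+\hbar}z_0,\ \frac{1}{1+\hbar}z_0\Big)=f(U^{\top}z),\qquad U=\begin{pmatrix}1-t&t\\1&0\end{pmatrix},\ t=\frac1{1+\hbar}.$$ In particular, for the coherent states $\varphi_v(z)=e^{v^\top z}$ ($v\in\mathbb{C}^2$) one has $r\varphi_v=\varphi_{Uv}$.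
   Context: $\rho_0\colon D(\mathsf{B}_1)\to\operatorname{End}(A^1[[\hbar]])$ is given by $a\mapsto 1+\hbar$, $b\mapsto\partial/\partial z$, $\phi\mapsto\hbar z$, $\psi\mapsto -z\,\partial/\partial z$, $\chi_{u,v}f(z)=e^{\hbar uz}f(vz)$. $A^n$ denotes the span of functions $\mathbb{C}^n\to\mathbb{C}$ of the form $p(z)e^{u^\top z}$ with $p$ a polynomial and $u\in\mathbb{C}^n$; elements of $\mathbb{C}^n$ are column vectors. The binomial $\binom{\psi}{m}=\psi(\psi-1)\cdots(\psi-m+1)/m!$. *)

theory Defs
  imports "HOL-Analysis.Analysis" "HOL-Library.Numeral_Type"
begin

text \<open>Points of C^2 are column vectors z = (z_0, z_1) :: complex^2 (indices 0, 1 :: 2).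
  An element of A^2[[hbar]] is represented by its sequence of hbar-coefficients.\<close>

type_synonym hser = "nat \<Rightarrow> (complex^2 \<Rightarrow> complex)"

definition bil :: "complex^2 \<Rightarrow> complex^2 \<Rightarrow> complex" where
  "bil u z = u$0 * z$0 + u$1 * z$1"

definition A2 :: "(complex^2 \<Rightarrow> complex) set" where
  "A2 = {f. \<exists>(S::nat set) c k0 k1 (u::nat \<Rightarrow> complex^2). finite S \<and>
            f = (\<lambda>z. \<Sum>i\<in>S. c i * (z$0) ^ k0 i * (z$1) ^ k1 i * exp (bil (u i) z))}"

definition A2ser :: "hser set" where
  "A2ser = {F. \<forall>j. F j \<in> A2}"

definition partial :: "2 \<Rightarrow> (complex^2 \<Rightarrow> complex) \<Rightarrow> complex^2 \<Rightarrow> complex" where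
  "partial i g z = deriv (\<lambda>w. g (\<chi> k. if k = i then w else z$k)) (z$i)"

text \<open>rho_0 on generators, acting in tensor slot i (on the variable z_i), hbar-linearly.\<close>
definition rho_a :: "2 \<Rightarrow> hser \<Rightarrow> hser" where   (* a |-> 1 + hbar *)
  "rho_a i F = (\<lambda>N z. F N z + (if N = 0 then 0 else F (N - 1) z))"

definition rho_b :: "2 \<Rightarrow> hser \<Rightarrow> hser" where
  "rho_b i F = (\<lambda>N. partial i (F N))"

definition rho_phi :: "2 \<Rightarrow> hser \<Rightarrow> hser" where (* phi |-> hbar z *)
  "rho_phi i F = (\<lambda>N z. if N = 0 then 0 else z$i * F (N - 1) z)"

definition rho_psi :: "2 \<Rightarrow> hser \<Rightarrow> hser" where
  "rho_psi i F = (\<lambda>N z. - (z$i) * partial i (F N) z)"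

fun ffact_op :: "(hser \<Rightarrow> hser) \<Rightarrow> nat \<Rightarrow> hser \<Rightarrow> hser" where
  "ffact_op T 0 F = F"
| "ffact_op T (Suc k) F = (\<lambda>N z. T (ffact_op T k F) N z - of_nat k * ffact_op T k F N z)"

definition binom_op :: "(hser \<Rightarrow> hser) \<Rightarrow> nat \<Rightarrow> hser \<Rightarrow> hser" where
  "binom_op T m F = (\<lambda>N z. ffact_op T m F N z / fact m)"

definition am1 :: "2 \<Rightarrow> hser \<Rightarrow> hser" where
  "am1 i F = (\<lambda>N z. rho_a i F N z - F N z)"

text \<open>rho^{(x)2} of the (m,n)-term (1/n!) binom(psi,m) phi^n (x) (a-1)^m b^n of R:
  first tensor factor acts on z_0, second on z_1.\<close>
definition R_term :: "nat \<Rightarrow> nat \<Rightarrow> hser \<Rightarrow> hser" where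
  "R_term m n F = (\<lambda>N z. binom_op (rho_psi 0) m
      ((rho_phi 0 ^^ n) ((am1 1 ^^ m) ((rho_b 1 ^^ n) F))) N z / fact n)"

definition rho2R :: "hser \<Rightarrow> hser" where
  "rho2R F = (\<lambda>N z. infsum (\<lambda>p. R_term (fst p) (snd p) F N z) UNIV)"

definition swapP :: "hser \<Rightarrow> hser" where
  "swapP F = (\<lambda>N z. F N (\<chi> i. if i = 0 then z$1 else z$0))"

definition r_op :: "hser \<Rightarrow> hser" where
  "r_op F = rho2R (swapP F)"

definition Umat :: "complex \<Rightarrow> complex^2^2" where
  "Umat h = (let t = 1 / (1 + h) in
     (\<chi> i j. if i = 0 then (if j = 0 then 1 - t else t) else (if j = 0 then 1 else 0)))"

text \<open>N-th Taylor coefficient at h = 0 (the hbar-expansion).\<close>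
definition hcoeff :: "(complex \<Rightarrow> complex) \<Rightarrow> nat \<Rightarrow> complex" where
  "hcoeff g N = (deriv ^^ N) g 0 / fact N"

text \<open>The hbar-series of f(U^T z) for f in A^2[[hbar]].\<close>
definition substU :: "hser \<Rightarrow> hser" where
  "substU F = (\<lambda>N z. \<Sum>j\<le>N. hcoeff (\<lambda>h. F j (transpose (Umat h) *v z)) (N - j))"

definition coh :: "complex^2 \<Rightarrow> complex^2 \<Rightarrow> complex" where
  "coh v = (\<lambda>z. exp (bil v z))"

definition cohU :: "complex^2 \<Rightarrow> hser" where
  "cohU v = (\<lambda>N z. hcoeff (\<lambda>h. coh (Umat h *v v) z) N)"

end

theory Submission
  imports Defs "HOL-Complex_Analysis.Cauchy_Integral_Formula"
begin

text \<open>Let G be F with its two arguments exchanged and flow h z = (t z_0, z_1 + (1 - t) z_0),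
  t = 1/(1+h), so that F(U^T z) = G(flow h z). Along this flow
  (1 + h) d/dh g(flow h z) = (D g)(flow h z) with D = psi + X, psi = -z_0 d/dz_0 and
  X = z_0 d/dz_1; differentiating K times gives that the K-th Taylor coefficient at h = 0 is
  binom(D, K) g. Since X psi = psi X + X, the falling factorial of psi + X expands like a binomial,
  binom(D, K) = sum_{m+n=K} binom(psi, m) X^n / n!, and X^n = z_0^n (d/dz_1)^n is what the
  factor phi^n (x) b^n of R contributes. Matching hbar-degrees, the (m, n)-terms of R with
  m + n = K reproduce the K-th Taylor coefficient.\<close>

section \<open>The space A^2\<close>

type_synonym fun2 = "complex^2 \<Rightarrow> complex"

definition exp_monomial :: "complex \<Rightarrow> nat \<Rightarrow> nat \<Rightarrow> complex^2 \<Rightarrow> fun2" where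
  "exp_monomial c a b u = (\<lambda>z. c * (z$0) ^ a * (z$1) ^ b * exp (bil u z))"

lemma A2_iff:
  "f \<in> A2 \<longleftrightarrow> (\<exists>(S::nat set) c k0 k1 u. finite S \<and>
     f = (\<lambda>z. \<Sum>i\<in>S. exp_monomial (c i) (k0 i) (k1 i) (u i) z))"
  by (simp add: A2_def exp_monomial_def)

lemma A2I:
  "finite (S::nat set) \<Longrightarrow> f = (\<lambda>z. \<Sum>i\<in>S. exp_monomial (c i) (k0 i) (k1 i) (u i) z) \<Longrightarrow> f \<in> A2"
  unfolding A2_iff by blast

lemma A2E:
  assumes "f \<in> A2"
  obtains S c k0 k1 u where "finite (S::nat set)"
    "f = (\<lambda>z. \<Sum>i\<in>S. exp_monomial (c i) (k0 i) (k1 i) (u i) z)"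
  using assms unfolding A2_iff by blast

lemma A2_zero: "(\<lambda>z. 0) \<in> A2"
  by (rule A2I[of "{}"]) simp_all

lemma A2_exp_monomial: "exp_monomial c a b u \<in> A2"
  by (rule A2I[of "{0}" _ "\<lambda>_. c" "\<lambda>_. a" "\<lambda>_. b" "\<lambda>_. u"]) simp_all

lemma A2_cmult:
  assumes "f \<in> A2" shows "(\<lambda>z. a * f z) \<in> A2"
proof -
  obtain S c k0 k1 u where S: "finite (S::nat set)"
    and f: "f = (\<lambda>z. \<Sum>i\<in>S. exp_monomial (c i) (k0 i) (k1 i) (u i) z)"
    using assms by (rule A2E)
  show ?thesis
    by (rule A2I[OF S, of _ "\<lambda>i. a * c i" k0 k1 u])
       (simp add: f exp_monomial_def sum_distrib_left mult.assoc)
qed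

text \<open>The two families are merged by indexing the first with even and the second with odd numbers.\<close>
lemma A2_add:
  assumes "f \<in> A2" "g \<in> A2" shows "(\<lambda>z. f z + g z) \<in> A2"
proof -
  obtain S c k0 k1 u where S: "finite (S::nat set)"
    and f: "f = (\<lambda>z. \<Sum>i\<in>S. exp_monomial (c i) (k0 i) (k1 i) (u i) z)"
    using assms(1) by (rule A2E)
  obtain S' c' k0' k1' u' where S': "finite (S'::nat set)"
    and g: "g = (\<lambda>z. \<Sum>i\<in>S'. exp_monomial (c' i) (k0' i) (k1' i) (u' i) z)"
    using assms(2) by (rule A2E)
  define C where "C i = (if even i then c (i div 2) else c' (i div 2))" for i :: nat
  define K0 where "K0 i = (if even i then k0 (i div 2) else k0' (i div 2))" for i :: nat
  define K1 where "K1 i = (if even i then k1 (i div 2) else k1' (i div 2))" for i :: nat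
  define U where "U i = (if even i then u (i div 2) else u' (i div 2))" for i :: nat
  have disj: "(\<lambda>i. 2 * i) ` S \<inter> (\<lambda>i. 2 * i + 1) ` S' = {}"
    by auto presburger
  have "(\<lambda>z. f z + g z) = (\<lambda>z. \<Sum>i \<in> (\<lambda>i. 2 * i) ` S \<union> (\<lambda>i. 2 * i + 1) ` S'.
                                     exp_monomial (C i) (K0 i) (K1 i) (U i) z)"
    using S S' disj
    by (auto simp: sum.union_disjoint sum.reindex inj_on_def f g C_def K0_def K1_def U_def)
  thus ?thesis
    using S S' by (intro A2I) auto
qed

lemma A2_lincomb: "f \<in> A2 \<Longrightarrow> g \<in> A2 \<Longrightarrow> (\<lambda>z. a * f z + b * g z) \<in> A2"
  by (intro A2_add A2_cmult)

lemma A2_diff: "f \<in> A2 \<Longrightarrow> g \<in> A2 \<Longrightarrow> (\<lambda>z. f z - b * g z) \<in> A2"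
  using A2_lincomb[of f g 1 "-b"] by simp

lemma A2_induct [consumes 1, case_names zero exp_monomial add]:
  assumes "f \<in> A2" "P (\<lambda>z. 0)" "\<And>c a b u. P (exp_monomial c a b u)"
    "\<And>f g. f \<in> A2 \<Longrightarrow> g \<in> A2 \<Longrightarrow> P f \<Longrightarrow> P g \<Longrightarrow> P (\<lambda>z. f z + g z)"
  shows "P f"
proof -
  obtain S c k0 k1 u where S: "finite (S::nat set)"
    and f: "f = (\<lambda>z. \<Sum>i\<in>S. exp_monomial (c i) (k0 i) (k1 i) (u i) z)"
    using assms(1) by (rule A2E)
  have "P (\<lambda>z. \<Sum>i\<in>S. exp_monomial (c i) (k0 i) (k1 i) (u i) z) \<and>
        (\<lambda>z. \<Sum>i\<in>S. exp_monomial (c i) (k0 i) (k1 i) (u i) z) \<in> A2"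
    using S
  proof (induction S rule: finite_induct)
    case empty
    thus ?case using assms(2) A2_zero by simp
  next
    case (insert x S)
    thus ?case
      using assms(3,4) A2_add A2_exp_monomial[of "c x" "k0 x" "k1 x" "u x"] by simp
  qed
  thus ?thesis using f by simp
qed

lemma exhaust_2_zero_one: "(i::2) = 0 \<or> i = 1"
  using exhaust_2[of i] by auto

lemma exp_monomial_slice_field_differentiable:
  "(\<lambda>x. exp_monomial c a b u (\<chi> k. if k = i then x else w$k)) field_differentiable (at y)"
proof -
  have "(\<lambda>x. exp_monomial c a b u (\<chi> k. if k = i then x else w$k)) holomorphic_on UNIV"
    using exhaust_2_zero_one[of i]
    by (auto simp: exp_monomial_def bil_def intro!: holomorphic_intros)
  thus ?thesis by (rule holomorphic_on_imp_differentiable_at) auto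
qed

lemma A2_slice_field_differentiable:
  "f \<in> A2 \<Longrightarrow> (\<lambda>x. f (\<chi> k. if k = i then x else w$k)) field_differentiable (at y)"
  by (induction f rule: A2_induct)
     (simp_all add: exp_monomial_slice_field_differentiable field_differentiable_add)

lemma partial_lincomb:
  "f \<in> A2 \<Longrightarrow> g \<in> A2 \<Longrightarrow>
   partial i (\<lambda>z. a * f z + b * g z) = (\<lambda>z. a * partial i f z + b * partial i g z)"
  unfolding partial_def
  by (rule ext, subst deriv_add)
     (auto intro!: field_differentiable_mult A2_slice_field_differentiable A2_cmult
       simp: deriv_cmult A2_slice_field_differentiable)

lemma partial_0_exp_monomial:
  "partial 0 (exp_monomial c a b u) =
     (\<lambda>w. exp_monomial (c * of_nat a) (a - 1) b u w + exp_monomial (c * u$0) a b u w)"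
proof
  fix w :: "complex^2"
  have "((\<lambda>x. c * x^a * (w$1)^b * exp (u$0 * x + u$1 * w$1)) has_field_derivative
     (exp_monomial (c * of_nat a) (a - 1) b u w + exp_monomial (c * u$0) a b u w)) (at (w$0))"
    unfolding exp_monomial_def bil_def
    by (rule derivative_eq_intros refl | simp)+
  thus "partial 0 (exp_monomial c a b u) w =
          exp_monomial (c * of_nat a) (a - 1) b u w + exp_monomial (c * u$0) a b u w"
    unfolding partial_def by (simp add: exp_monomial_def bil_def DERIV_imp_deriv)
qed

lemma partial_1_exp_monomial:
  "partial 1 (exp_monomial c a b u) =
     (\<lambda>w. exp_monomial (c * of_nat b) a (b - 1) u w + exp_monomial (c * u$1) a b u w)"
proof
  fix w :: "complex^2"
  have "((\<lambda>x. c * (w$0)^a * x^b * exp (u$0 * w$0 + u$1 * x)) has_field_derivative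
     (exp_monomial (c * of_nat b) a (b - 1) u w + exp_monomial (c * u$1) a b u w)) (at (w$1))"
    unfolding exp_monomial_def bil_def
    by (rule derivative_eq_intros refl | simp)+
  thus "partial 1 (exp_monomial c a b u) w =
          exp_monomial (c * of_nat b) a (b - 1) u w + exp_monomial (c * u$1) a b u w"
    unfolding partial_def by (simp add: exp_monomial_def bil_def DERIV_imp_deriv)
qed

section \<open>Linear operators on A^2 and their falling factorials\<close>

definition A2_linear :: "(fun2 \<Rightarrow> fun2) \<Rightarrow> bool" where
  "A2_linear T \<longleftrightarrow> (\<forall>f\<in>A2. T f \<in> A2) \<and>
     (\<forall>f\<in>A2. \<forall>g\<in>A2. \<forall>a b. T (\<lambda>z. a * f z + b * g z) = (\<lambda>z. a * T f z + b * T g z))"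

lemma A2_linearI:
  assumes "\<And>f g a b. f \<in> A2 \<Longrightarrow> g \<in> A2 \<Longrightarrow>
             T (\<lambda>z. a * f z + b * g z) = (\<lambda>z. a * T f z + b * T g z)"
    and "\<And>c a b u. T (exp_monomial c a b u) \<in> A2"
  shows "A2_linear T"
proof -
  have "T f \<in> A2" if "f \<in> A2" for f
    using that
  proof (induction f rule: A2_induct)
    case zero
    thus ?case using assms(1)[OF A2_zero A2_zero, of 0 0] A2_zero by simp
  next
    case (exp_monomial c a b u)
    thus ?case by (rule assms(2))
  next
    case (add f g)
    thus ?case using assms(1)[of f g 1 1] A2_add by simp
  qed
  thus ?thesis unfolding A2_linear_def using assms(1) by blast
qed

lemma A2_linear_closed: "A2_linear T \<Longrightarrow> f \<in> A2 \<Longrightarrow> T f \<in> A2"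
  unfolding A2_linear_def by blast

lemma A2_linear_lincomb:
  "A2_linear T \<Longrightarrow> f \<in> A2 \<Longrightarrow> g \<in> A2 \<Longrightarrow>
   T (\<lambda>z. a * f z + b * g z) = (\<lambda>z. a * T f z + b * T g z)"
  unfolding A2_linear_def by blast

lemma A2_linear_add:
  "A2_linear T \<Longrightarrow> f \<in> A2 \<Longrightarrow> g \<in> A2 \<Longrightarrow> T (\<lambda>z. f z + g z) = (\<lambda>z. T f z + T g z)"
  using A2_linear_lincomb[of T f g 1 1] by simp

lemma A2_linear_diff:
  "A2_linear T \<Longrightarrow> f \<in> A2 \<Longrightarrow> g \<in> A2 \<Longrightarrow> T (\<lambda>z. f z - c * g z) = (\<lambda>z. T f z - c * T g z)"
  using A2_linear_lincomb[of T f g 1 "-c"] by simp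

lemma A2_linear_zero: "A2_linear T \<Longrightarrow> T (\<lambda>z. 0) = (\<lambda>z. 0)"
  using A2_linear_lincomb[of T "\<lambda>z. 0" "\<lambda>z. 0" 0 0] A2_zero by simp

lemma A2_linear_sum:
  assumes "A2_linear T" "finite S" "\<And>n. n \<in> S \<Longrightarrow> h n \<in> A2"
  shows "T (\<lambda>z. \<Sum>n\<in>S. c n * h n z) = (\<lambda>z. \<Sum>n\<in>S. c n * T (h n) z)"
proof -
  have "T (\<lambda>z. \<Sum>n\<in>S. c n * h n z) = (\<lambda>z. \<Sum>n\<in>S. c n * T (h n) z) \<and>
        (\<lambda>z. \<Sum>n\<in>S. c n * h n z) \<in> A2"
    using assms(2,3)
  proof (induction S rule: finite_induct)
    case empty
    thus ?case by (simp add: A2_linear_zero[OF assms(1)] A2_zero)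
  next
    case (insert x S)
    thus ?case
      using A2_linear_lincomb[OF assms(1), of "h x" "\<lambda>z. \<Sum>n\<in>S. c n * h n z" "c x" 1]
        A2_lincomb[of "h x" "\<lambda>z. \<Sum>n\<in>S. c n * h n z" "c x" 1]
      by simp
  qed
  thus ?thesis ..
qed

lemma A2_linear_plus:
  "A2_linear P \<Longrightarrow> A2_linear X \<Longrightarrow> A2_linear (\<lambda>f z. P f z + X f z)"
  unfolding A2_linear_def by (auto simp: A2_add algebra_simps)

lemma A2_linear_funpow: "A2_linear T \<Longrightarrow> g \<in> A2 \<Longrightarrow> (T ^^ n) g \<in> A2"
  by (induction n) (simp_all add: A2_linear_closed)

lemma A2_linear_partial: "A2_linear (partial i)"
proof (rule A2_linearI)
  fix c a b u
  show "partial i (exp_monomial c a b u) \<in> A2"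
    using exhaust_2_zero_one[of i]
    by (auto simp: partial_0_exp_monomial partial_1_exp_monomial A2_add A2_exp_monomial)
qed (rule partial_lincomb)

primrec falling_op :: "(fun2 \<Rightarrow> fun2) \<Rightarrow> nat \<Rightarrow> fun2 \<Rightarrow> fun2" where
  "falling_op T 0 g = g"
| "falling_op T (Suc k) g = (\<lambda>z. T (falling_op T k g) z - of_nat k * falling_op T k g z)"

lemma falling_op_closed: "A2_linear T \<Longrightarrow> g \<in> A2 \<Longrightarrow> falling_op T k g \<in> A2"
  by (induction k) (simp_all add: A2_diff A2_linear_closed)

lemma falling_op_zero: "A2_linear T \<Longrightarrow> falling_op T k (\<lambda>z. 0) = (\<lambda>z. 0)"
  by (induction k) (simp_all add: A2_linear_zero)

lemma falling_op_commute_shift: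
  assumes "A2_linear T" "g \<in> A2"
  shows "falling_op T k (\<lambda>z. T g z - c * g z) = (\<lambda>z. T (falling_op T k g) z - c * falling_op T k g z)"
proof (induction k)
  case 0
  show ?case by simp
next
  case (Suc k)
  have "falling_op T k g \<in> A2" "T (falling_op T k g) \<in> A2"
    using assms falling_op_closed A2_linear_closed by blast+
  thus ?case
    by (simp add: Suc.IH A2_linear_diff[OF assms(1)] algebra_simps)
qed

lemma Suc_choose: "Suc K choose n = (K choose n) + (if n = 0 then 0 else K choose (n - 1))"
  by (cases n) simp_all

text \<open>Pascal's rule together with (K - n) binom(K, n) = (n + 1) binom(K, n + 1): this is the
  induction step of the binomial expansion of falling factorials below.\<close>
lemma binomial_sum_recurrence:
  fixes w :: "nat \<Rightarrow> nat \<Rightarrow> 'a::comm_ring_1"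
  shows "(\<Sum>n\<le>K. of_nat (K choose n) * (w (Suc (K - n)) n + w (K - n) (Suc n)
            + of_nat (K - n) * w (K - n - 1) (Suc n) - of_nat n * w (K - n) n))
       = (\<Sum>n\<le>Suc K. of_nat (Suc K choose n) * w (Suc K - n) n)"
proof -
  have absorb: "(\<Sum>n\<le>K. of_nat (K choose n) * (of_nat (K - n) * w (K - n - 1) (Suc n)))
              = (\<Sum>n\<le>K. of_nat (K choose n) * (of_nat n * w (K - n) n))"
  proof (cases K)
    case 0
    thus ?thesis by simp
  next
    case (Suc K')
    have "(\<Sum>n\<le>K. of_nat (K choose n) * (of_nat n * w (K - n) n))
        = (\<Sum>n\<le>K'. of_nat (K choose Suc n) * (of_nat (Suc n) * w (K - Suc n) (Suc n)))"
      unfolding Suc by (subst sum.atMost_Suc_shift) simp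
    also have "\<dots> = (\<Sum>n\<le>K'. of_nat (K choose n) * (of_nat (K - n) * w (K - n - 1) (Suc n)))"
    proof (rule sum.cong[OF refl])
      fix n
      have "(K choose Suc n) * Suc n = (K choose n) * (K - n)"
        using binomial_absorb_comp[of K n] times_binomial_minus1_eq[of "Suc n" K]
        by (simp add: algebra_simps)
      hence "of_nat (K choose Suc n) * of_nat (Suc n) = (of_nat (K choose n) * of_nat (K - n) :: 'a)"
        by (metis of_nat_mult)
      thus "of_nat (K choose Suc n) * (of_nat (Suc n) * w (K - Suc n) (Suc n)) =
            of_nat (K choose n) * (of_nat (K - n) * w (K - n - 1) (Suc n))"
        by (simp add: mult.assoc[symmetric])
    qed
    also have "\<dots> = (\<Sum>n\<le>K. of_nat (K choose n) * (of_nat (K - n) * w (K - n - 1) (Suc n)))"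
      unfolding Suc by (subst sum.atMost_Suc) simp
    finally show ?thesis by simp
  qed
  have pascal: "(\<Sum>n\<le>Suc K. of_nat (Suc K choose n) * w (Suc K - n) n)
      = (\<Sum>n\<le>K. of_nat (K choose n) * w (Suc (K - n)) n) + (\<Sum>n\<le>K. of_nat (K choose n) * w (K - n) (Suc n))"
  proof -
    have "(\<Sum>n\<le>Suc K. of_nat (Suc K choose n) * w (Suc K - n) n)
       = (\<Sum>n\<le>Suc K. of_nat (K choose n) * w (Suc K - n) n)
         + (\<Sum>n\<le>Suc K. (if n = 0 then 0 else of_nat (K choose (n - 1))) * w (Suc K - n) n)"
      by (subst sum.distrib[symmetric], rule sum.cong[OF refl]) (simp add: Suc_choose distrib_right)
    also have "(\<Sum>n\<le>Suc K. of_nat (K choose n) * w (Suc K - n) n)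
             = (\<Sum>n\<le>K. of_nat (K choose n) * w (Suc (K - n)) n)"
      by (subst sum.atMost_Suc) (auto intro!: sum.cong simp: Suc_diff_le binomial_eq_0)
    also have "(\<Sum>n\<le>Suc K. (if n = 0 then 0 else of_nat (K choose (n - 1))) * w (Suc K - n) n)
             = (\<Sum>n\<le>K. of_nat (K choose n) * w (K - n) (Suc n))"
      by (subst sum.atMost_Suc_shift) simp
    finally show ?thesis .
  qed
  show ?thesis
    unfolding pascal using absorb
    by (simp add: distrib_left sum.distrib sum_subtractf algebra_simps)
qed

context
  fixes P X :: "fun2 \<Rightarrow> fun2"
  assumes linear_P: "A2_linear P" and linear_X: "A2_linear X"
    and commutator: "\<And>f. f \<in> A2 \<Longrightarrow> X (P f) = (\<lambda>z. P (X f) z + X f z)"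
begin

lemma commute_falling_op:
  assumes "y \<in> A2"
  shows "X (falling_op P m y) =
           (\<lambda>z. falling_op P m (X y) z + of_nat m * falling_op P (m - 1) (X y) z)"
proof (induction m)
  case 0
  show ?case by simp
next
  case (Suc m)
  let ?h = "falling_op P m y"
  let ?x = "X y"
  have h: "?h \<in> A2" "P ?h \<in> A2"
    using falling_op_closed[OF linear_P assms] A2_linear_closed[OF linear_P] by blast+
  have x: "falling_op P m ?x \<in> A2" "falling_op P (m - 1) ?x \<in> A2"
    using falling_op_closed[OF linear_P A2_linear_closed[OF linear_X assms]] by blast+
  have "X (falling_op P (Suc m) y) = (\<lambda>z. X (P ?h) z - of_nat m * X ?h z)"
    by (simp add: A2_linear_diff[OF linear_X h(2,1)])
  also have "\<dots> = (\<lambda>z. P (X ?h) z + (1 - of_nat m) * X ?h z)"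
    by (simp add: commutator[OF h(1)] algebra_simps)
  also have "\<dots> = (\<lambda>z. P (falling_op P m ?x) z + of_nat m * P (falling_op P (m - 1) ?x) z
       + (1 - of_nat m) * (falling_op P m ?x z + of_nat m * falling_op P (m - 1) ?x z))"
  proof -
    have "P (\<lambda>z. falling_op P m ?x z + of_nat m * falling_op P (m - 1) ?x z)
        = (\<lambda>z. P (falling_op P m ?x) z + of_nat m * P (falling_op P (m - 1) ?x) z)"
      using A2_linear_lincomb[OF linear_P x, of 1 "of_nat m"] by simp
    thus ?thesis unfolding Suc.IH by (rule arg_cong)
  qed
  also have "\<dots> = (\<lambda>z. falling_op P (Suc m) ?x z + of_nat (Suc m) * falling_op P m ?x z)"
    by (cases m) (auto simp: algebra_simps)
  finally show ?case by simp
qed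

lemma falling_op_plus_binomial:
  assumes "g \<in> A2"
  shows "falling_op (\<lambda>f z. P f z + X f z) K g =
           (\<lambda>z. \<Sum>n\<le>K. of_nat (K choose n) * falling_op P (K - n) ((X ^^ n) g) z)"
proof (induction K)
  case 0
  show ?case by simp
next
  case (Suc K)
  let ?w = "\<lambda>m n. falling_op P m ((X ^^ n) g)"
  have w: "?w m n \<in> A2" for m n
    by (intro falling_op_closed[OF linear_P] A2_linear_funpow[OF linear_X assms])
  have step: "P (?w m n) z + X (?w m n) z =
      ?w (Suc m) n z + ?w m (Suc n) z + of_nat m * ?w (m - 1) (Suc n) z + of_nat m * ?w m n z" for m n z
    by (simp add: commute_falling_op[OF A2_linear_funpow[OF linear_X assms]] algebra_simps)
  show ?case
  proof
    fix z
    have "falling_op (\<lambda>f z. P f z + X f z) (Suc K) g z =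
          (\<Sum>n\<le>K. of_nat (K choose n) * (P (?w (K - n) n) z + X (?w (K - n) n) z)
                   - of_nat K * (of_nat (K choose n) * ?w (K - n) n z))"
      by (simp add: Suc.IH A2_linear_sum[OF linear_P] A2_linear_sum[OF linear_X] w
            sum.distrib sum_subtractf sum_distrib_left distrib_left)
    also have "\<dots> = (\<Sum>n\<le>K. of_nat (K choose n) * (?w (Suc (K - n)) n z + ?w (K - n) (Suc n) z
            + of_nat (K - n) * ?w (K - n - 1) (Suc n) z - of_nat n * ?w (K - n) n z))"
      by (intro sum.cong refl) (simp add: step of_nat_diff algebra_simps)
    also have "\<dots> = (\<Sum>n\<le>Suc K. of_nat (Suc K choose n) * ?w (Suc K - n) n z)"
      by (rule binomial_sum_recurrence)
    finally show "falling_op (\<lambda>f z. P f z + X f z) (Suc K) g z =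
        (\<Sum>n\<le>Suc K. of_nat (Suc K choose n) * falling_op P (Suc K - n) ((X ^^ n) g) z)" .
  qed
qed

end

section \<open>The generator of the flow\<close>

text \<open>psi_op is rho(psi) acting on z_0, and phi_b_op is rho(phi) (x) rho(b) with the factor hbar
  removed.\<close>

definition psi_op :: "fun2 \<Rightarrow> fun2" where
  "psi_op f = (\<lambda>z. - (z$0) * partial 0 f z)"

definition phi_b_op :: "fun2 \<Rightarrow> fun2" where
  "phi_b_op f = (\<lambda>z. z$0 * partial 1 f z)"

definition flow_generator :: "fun2 \<Rightarrow> fun2" where
  "flow_generator f = (\<lambda>z. psi_op f z + phi_b_op f z)"

lemma psi_op_exp_monomial:
  "psi_op (exp_monomial c a b u) =
     (\<lambda>w. exp_monomial (- (c * of_nat a)) a b u w + exp_monomial (- (c * u$0)) (Suc a) b u w)"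
  unfolding psi_op_def partial_0_exp_monomial
  by (rule ext, cases a) (simp_all add: exp_monomial_def algebra_simps)

lemma phi_b_op_exp_monomial:
  "phi_b_op (exp_monomial c a b u) =
     (\<lambda>w. exp_monomial (c * of_nat b) (Suc a) (b - 1) u w + exp_monomial (c * u$1) (Suc a) b u w)"
  unfolding phi_b_op_def partial_1_exp_monomial
  by (rule ext) (simp add: exp_monomial_def algebra_simps)

lemma A2_linear_psi_op: "A2_linear psi_op"
proof (rule A2_linearI)
  fix f g a b
  assume "f \<in> A2" "g \<in> A2"
  thus "psi_op (\<lambda>z. a * f z + b * g z) = (\<lambda>z. a * psi_op f z + b * psi_op g z)"
    by (simp add: psi_op_def partial_lincomb algebra_simps)
qed (simp add: psi_op_exp_monomial A2_add A2_exp_monomial)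

lemma A2_linear_phi_b_op: "A2_linear phi_b_op"
proof (rule A2_linearI)
  fix f g a b
  assume "f \<in> A2" "g \<in> A2"
  thus "phi_b_op (\<lambda>z. a * f z + b * g z) = (\<lambda>z. a * phi_b_op f z + b * phi_b_op g z)"
    by (simp add: phi_b_op_def partial_lincomb algebra_simps)
qed (simp add: phi_b_op_exp_monomial A2_add A2_exp_monomial)

lemma A2_linear_flow_generator: "A2_linear flow_generator"
  unfolding flow_generator_def[abs_def]
  by (rule A2_linear_plus[OF A2_linear_psi_op A2_linear_phi_b_op])

lemma phi_b_psi_commutator:
  "f \<in> A2 \<Longrightarrow> phi_b_op (psi_op f) = (\<lambda>z. psi_op (phi_b_op f) z + phi_b_op f z)"
proof (induction f rule: A2_induct)
  case zero
  show ?case by (simp add: A2_linear_zero A2_linear_psi_op A2_linear_phi_b_op)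
next
  case (exp_monomial c a b u)
  show ?case
    by (simp add: psi_op_exp_monomial phi_b_op_exp_monomial A2_exp_monomial
          A2_linear_add[OF A2_linear_psi_op] A2_linear_add[OF A2_linear_phi_b_op])
       (simp add: exp_monomial_def algebra_simps)
next
  case (add f g)
  have "psi_op f \<in> A2" "psi_op g \<in> A2" "phi_b_op f \<in> A2" "phi_b_op g \<in> A2"
    using add A2_linear_closed A2_linear_psi_op A2_linear_phi_b_op by blast+
  with add show ?case
    by (simp add: A2_linear_add[OF A2_linear_psi_op] A2_linear_add[OF A2_linear_phi_b_op]
          algebra_simps)
qed

lemma partial_1_mult_z0:
  assumes "f \<in> A2"
  shows "partial 1 (\<lambda>z. p (z$0) * f z) = (\<lambda>z. p (z$0) * partial 1 f z)"
proof
  fix z :: "complex^2"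
  have "partial 1 (\<lambda>z. p (z$0) * f z) z = deriv (\<lambda>x. p (z$0) * f (\<chi> k. if k = 1 then x else z$k)) (z$1)"
    by (simp add: partial_def)
  also have "\<dots> = p (z$0) * partial 1 f z"
    unfolding partial_def by (rule deriv_cmult[OF A2_slice_field_differentiable[OF assms]])
  finally show "partial 1 (\<lambda>z. p (z$0) * f z) z = p (z$0) * partial 1 f z" .
qed

lemma funpow_phi_b_op:
  assumes "g \<in> A2"
  shows "(phi_b_op ^^ n) g = (\<lambda>z. (z$0) ^ n * (partial 1 ^^ n) g z)"
proof (induction n)
  case 0
  show ?case by simp
next
  case (Suc n)
  have "(partial 1 ^^ n) g \<in> A2"
    by (rule A2_linear_funpow[OF A2_linear_partial assms])
  hence "phi_b_op (\<lambda>z. (z$0) ^ n * (partial 1 ^^ n) g z) = (\<lambda>z. (z$0) ^ Suc n * (partial 1 ^^ Suc n) g z)"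
    by (simp add: phi_b_op_def partial_1_mult_z0[where p = "\<lambda>x. x ^ n"] mult.assoc)
  thus ?case
    by (simp add: Suc.IH)
qed

section \<open>Taylor coefficients along the flow\<close>

definition flow :: "complex \<Rightarrow> complex^2 \<Rightarrow> complex^2" where
  "flow h z = (\<chi> i. if i = 0 then z$0 / (1 + h) else z$1 + (1 - 1 / (1 + h)) * z$0)"

lemma flow_nth [simp]:
  "flow h z $ 0 = z$0 / (1 + h)"
  "flow h z $ 1 = z$1 + (1 - 1 / (1 + h)) * z$0"
  by (simp_all add: flow_def)

lemma flow_0 [simp]: "flow 0 z = z"
  unfolding vec_eq_iff
proof
  fix i :: 2
  show "flow 0 z $ i = z $ i"
    using exhaust_2_zero_one[of i] by auto
qed

lemma exp_monomial_flow_has_field_derivative: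
  assumes "1 + h \<noteq> 0"
  shows "((\<lambda>h. exp_monomial c a b u (flow h z)) has_field_derivative
           flow_generator (exp_monomial c a b u) (flow h z) / (1 + h)) (at h)"
proof -
  define t where "t = 1 / (1 + h)"
  define p where "p h = flow h z $ 0" for h
  define q where "q h = flow h z $ 1" for h
  define e where "e h = exp (u$0 * p h + u$1 * q h)" for h
  have dp: "(p has_field_derivative - (t * p h)) (at h)"
    unfolding p_def t_def using assms
    by (auto intro!: derivative_eq_intros simp: field_simps power2_eq_square)
  have dq: "(q has_field_derivative t * p h) (at h)"
    unfolding q_def p_def t_def using assms
    by (auto intro!: derivative_eq_intros simp: field_simps power2_eq_square)
  have de: "(e has_field_derivative (u$1 - u$0) * t * p h * e h) (at h)"
    unfolding e_def by (rule derivative_eq_intros dp dq refl)+ (simp add: algebra_simps)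
  have gen: "flow_generator (exp_monomial c a b u) (flow h z) =
      c * (- of_nat a * p h ^ a * q h ^ b - u$0 * p h ^ Suc a * q h ^ b
           + of_nat b * p h ^ Suc a * q h ^ (b - 1) + u$1 * p h ^ Suc a * q h ^ b) * e h"
    unfolding flow_generator_def psi_op_exp_monomial phi_b_op_exp_monomial
    by (simp add: exp_monomial_def bil_def e_def p_def q_def algebra_simps del: flow_nth)
  have "(\<lambda>h. exp_monomial c a b u (flow h z)) = (\<lambda>h. c * p h ^ a * q h ^ b * e h)"
    by (simp add: exp_monomial_def bil_def p_def q_def e_def del: flow_nth)
  moreover have "((\<lambda>h. c * p h ^ a * q h ^ b * e h) has_field_derivative
                   t * flow_generator (exp_monomial c a b u) (flow h z)) (at h)"
    unfolding gen
    by (rule derivative_eq_intros dp dq de refl)+ (cases a, simp_all add: algebra_simps)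
  ultimately show ?thesis by (simp add: t_def)
qed

lemma A2_flow_has_field_derivative:
  assumes "f \<in> A2" "1 + h \<noteq> 0"
  shows "((\<lambda>h. f (flow h z)) has_field_derivative flow_generator f (flow h z) / (1 + h)) (at h)"
  using assms(1)
proof (induction f rule: A2_induct)
  case zero
  show ?case by (simp add: A2_linear_zero[OF A2_linear_flow_generator])
next
  case (exp_monomial c a b u)
  show ?case by (rule exp_monomial_flow_has_field_derivative[OF assms(2)])
next
  case (add f g)
  thus ?case
    by (simp add: A2_linear_add[OF A2_linear_flow_generator] add_divide_distrib DERIV_add)
qed

lemma A2_flow_holomorphic: "f \<in> A2 \<Longrightarrow> (\<lambda>h. f (flow h z)) holomorphic_on - {-1}"
  unfolding holomorphic_on_open[OF open_Compl[OF closed_singleton]]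
  by (metis A2_flow_has_field_derivative ComplD add_eq_0_iff insert_iff)

lemma higher_deriv_first_order_ode:
  assumes "open S" "\<phi> holomorphic_on S" "\<psi> holomorphic_on S"
    and ode: "\<And>h. h \<in> S \<Longrightarrow> (1 + h) * deriv \<phi> h = \<psi> h"
    and "h \<in> S"
  shows "(1 + h) * (deriv ^^ Suc K) \<phi> h + of_nat K * (deriv ^^ K) \<phi> h = (deriv ^^ K) \<psi> h"
  using \<open>h \<in> S\<close>
proof (induction K arbitrary: h)
  case 0
  thus ?case using ode by simp
next
  case (Suc K)
  have ev: "\<forall>\<^sub>F x in nhds h.
      (deriv ^^ K) \<psi> x = (1 + x) * (deriv ^^ Suc K) \<phi> x + of_nat K * (deriv ^^ K) \<phi> x"
    using eventually_nhds_in_open[OF \<open>open S\<close> Suc.prems] by (rule eventually_mono) (metis Suc.IH)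
  have d: "((deriv ^^ k) \<phi> has_field_derivative (deriv ^^ Suc k) \<phi> h) (at h)" for k
    by (rule has_field_derivative_higher_deriv[OF assms(2,1) Suc.prems])
  have "(deriv ^^ Suc K) \<psi> h = deriv (\<lambda>x. (1 + x) * (deriv ^^ Suc K) \<phi> x + of_nat K * (deriv ^^ K) \<phi> x) h"
    using deriv_cong_ev[OF ev refl] by simp
  also have "\<dots> = (deriv ^^ Suc K) \<phi> h + (1 + h) * (deriv ^^ Suc (Suc K)) \<phi> h + of_nat K * (deriv ^^ Suc K) \<phi> h"
    by (rule DERIV_imp_deriv) (rule derivative_eq_intros d refl | simp)+
  finally show ?case by (simp add: algebra_simps)
qed

lemma higher_deriv_flow:
  "g \<in> A2 \<Longrightarrow> (deriv ^^ K) (\<lambda>h. g (flow h z)) 0 = falling_op flow_generator K g z"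
proof (induction K arbitrary: g)
  case 0
  thus ?case by simp
next
  case (Suc K)
  let ?\<phi> = "\<lambda>h. g (flow h z)"
  let ?\<psi> = "\<lambda>h. flow_generator g (flow h z)"
  have Dg: "flow_generator g \<in> A2"
    using A2_linear_closed[OF A2_linear_flow_generator Suc.prems] .
  have holo: "?\<phi> holomorphic_on - {-1}" "?\<psi> holomorphic_on - {-1}"
    using A2_flow_holomorphic[OF Suc.prems] A2_flow_holomorphic[OF Dg] by auto
  have ode: "(1 + h) * deriv ?\<phi> h = ?\<psi> h" if "h \<in> - {-1}" for h
    using that DERIV_imp_deriv[OF A2_flow_has_field_derivative[OF Suc.prems, of h z]]
    by (simp add: add_eq_0_iff)
  have S: "open (- {-1 :: complex})" "0 \<in> - {-1 :: complex}" by auto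
  have "(deriv ^^ Suc K) ?\<phi> 0 = (deriv ^^ K) ?\<psi> 0 - of_nat K * (deriv ^^ K) ?\<phi> 0"
    using higher_deriv_first_order_ode[OF S(1) holo ode S(2), of K] by (simp add: algebra_simps)
  also have "\<dots> = (deriv ^^ K) (\<lambda>h. ?\<psi> h - of_nat K * ?\<phi> h) 0"
    by (subst higher_deriv_diff[OF holo(2) _ S])
       (auto intro!: holomorphic_intros holo simp: higher_deriv_cmult[OF holo(1) S(2,1)])
  also have "\<dots> = falling_op flow_generator K (\<lambda>w. flow_generator g w - of_nat K * g w) z"
    by (rule Suc.IH[OF A2_diff[OF Dg Suc.prems]])
  also have "\<dots> = falling_op flow_generator (Suc K) g z"
    by (simp add: falling_op_commute_shift[OF A2_linear_flow_generator Suc.prems])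
  finally show ?case .
qed

section \<open>The operator r\<close>

lemma ffact_op_rho_psi_0: "ffact_op (rho_psi 0) m F = (\<lambda>N. falling_op psi_op m (F N))"
  by (induction m) (simp_all add: rho_psi_def psi_op_def)

lemma funpow_rho_b: "(rho_b i ^^ n) F = (\<lambda>N. (partial i ^^ n) (F N))"
  by (induction n) (simp_all add: rho_b_def)

lemma funpow_am1: "(am1 i ^^ m) F = (\<lambda>N z. if N < m then 0 else F (N - m) z)"
  by (induction m) (auto simp: am1_def rho_a_def fun_eq_iff)

lemma funpow_rho_phi: "(rho_phi i ^^ n) F = (\<lambda>N z. if N < n then 0 else (z$i) ^ n * F (N - n) z)"
  by (induction n) (auto simp: rho_phi_def fun_eq_iff)

lemma R_term_eq:
  assumes "F \<in> A2ser"
  shows "R_term m n F N = (if N < m + n then (\<lambda>z. 0)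
           else (\<lambda>z. falling_op psi_op m ((phi_b_op ^^ n) (F (N - m - n))) z / (fact m * fact n)))"
proof -
  have "F (N - m - n) \<in> A2" using assms by (simp add: A2ser_def)
  hence "(rho_phi 0 ^^ n) ((am1 1 ^^ m) ((rho_b 1 ^^ n) F)) N =
      (if N < m + n then (\<lambda>z. 0) else (phi_b_op ^^ n) (F (N - m - n)))"
    by (auto simp: funpow_rho_phi funpow_am1 funpow_rho_b funpow_phi_b_op fun_eq_iff add.commute)
  thus ?thesis
    by (auto simp: R_term_def binom_op_def ffact_op_rho_psi_0 falling_op_zero[OF A2_linear_psi_op])
qed

lemma R_term_A2: assumes "F \<in> A2ser" shows "R_term m n F N \<in> A2"
proof -
  have "F (N - m - n) \<in> A2" using assms by (simp add: A2ser_def)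
  hence "falling_op psi_op m ((phi_b_op ^^ n) (F (N - m - n))) \<in> A2"
    by (intro falling_op_closed A2_linear_funpow A2_linear_psi_op A2_linear_phi_b_op)
  thus ?thesis
    using A2_cmult[of _ "1 / (fact m * fact n)"] A2_zero by (simp add: R_term_eq[OF assms])
qed

lemma falling_op_flow_generator_expansion:
  assumes "g \<in> A2"
  shows "falling_op flow_generator K g z / fact K =
           (\<Sum>n\<le>K. falling_op psi_op (K - n) ((phi_b_op ^^ n) g) z / (fact (K - n) * fact n))"
proof -
  have "falling_op flow_generator K g z =
          (\<Sum>n\<le>K. of_nat (K choose n) * falling_op psi_op (K - n) ((phi_b_op ^^ n) g) z)"
    using falling_op_plus_binomial[OF A2_linear_psi_op A2_linear_phi_b_op phi_b_psi_commutator assms]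
    by (simp add: flow_generator_def[abs_def])
  moreover have "of_nat (K choose n) * x / fact K = x / (fact (K - n) * fact n)" if "n \<le> K" for n and x :: complex
    by (simp add: binomial_fact[OF that] field_simps)
  ultimately show ?thesis
    by (simp add: sum_divide_distrib)
qed

lemma A2_swap:
  "f \<in> A2 \<Longrightarrow> (\<lambda>w. f (\<chi> i. if i = 0 then w$1 else w$0)) \<in> A2"
proof (induction f rule: A2_induct)
  case zero
  show ?case by (rule A2_zero)
next
  case (exp_monomial c a b u)
  have "(\<lambda>w. exp_monomial c a b u (\<chi> i. if i = 0 then w$1 else w$0)) =
        exp_monomial c b a (\<chi> i. if i = 0 then u$1 else u$0)"
    by (simp add: exp_monomial_def bil_def fun_eq_iff algebra_simps)
  thus ?case by (simp add: A2_exp_monomial)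
next
  case (add f g)
  thus ?case by (simp add: A2_add)
qed

lemma swapP_A2ser: "F \<in> A2ser \<Longrightarrow> swapP F N \<in> A2"
  by (simp add: A2ser_def swapP_def A2_swap)

lemma sum_UNIV_2: "sum f (UNIV::2 set) = f 0 + f 1"
proof -
  have UNIV_2: "(UNIV::2 set) = {0, 1}" using exhaust_2_zero_one by auto
  show ?thesis unfolding UNIV_2 by simp
qed

lemma bil_transpose_mult: "bil v (transpose A *v z) = bil (A *v v) z"
  by (simp add: bil_def matrix_vector_mult_def transpose_def sum_UNIV_2 algebra_simps)

lemma transpose_Umat_mult: "transpose (Umat h) *v z = (\<chi> i. if i = 0 then flow h z $ 1 else flow h z $ 0)"
  unfolding vec_eq_iff
proof
  fix i :: 2
  show "(transpose (Umat h) *v z) $ i = (\<chi> i. if i = 0 then flow h z $ 1 else flow h z $ 0) $ i"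
    using exhaust_2_zero_one[of i]
    by (auto simp: matrix_vector_mult_def transpose_def Umat_def Let_def sum_UNIV_2 algebra_simps)
qed

lemma hcoeff_Umat:
  assumes "F \<in> A2ser"
  shows "hcoeff (\<lambda>h. F j (transpose (Umat h) *v z)) K = falling_op flow_generator K (swapP F j) z / fact K"
proof -
  have "(\<lambda>h. F j (transpose (Umat h) *v z)) = (\<lambda>h. swapP F j (flow h z))"
    unfolding swapP_def transpose_Umat_mult ..
  thus ?thesis
    by (simp add: hcoeff_def higher_deriv_flow swapP_A2ser[OF assms])
qed

lemma r_op_coeff:
  assumes "F \<in> A2ser"
  shows "r_op F N z = (\<Sum>j\<le>N. \<Sum>n\<le>N - j.
           falling_op psi_op (N - j - n) ((phi_b_op ^^ n) (swapP F j)) z / (fact (N - j - n) * fact n))"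
proof -
  let ?f = "\<lambda>p. R_term (fst p) (snd p) (swapP F) N z"
  define T where "T = {p :: nat \<times> nat. fst p + snd p \<le> N}"
  have G: "swapP F \<in> A2ser" using swapP_A2ser[OF assms] by (simp add: A2ser_def)
  have "finite T"
    by (rule finite_subset[of _ "{..N} \<times> {..N}"]) (auto simp: T_def)
  have "r_op F N z = infsum ?f UNIV" by (simp add: r_op_def rho2R_def)
  also have "\<dots> = infsum ?f T"
    by (rule infsum_cong_neutral) (auto simp: T_def R_term_eq[OF G])
  also have "\<dots> = sum ?f T"
    using \<open>finite T\<close> by simp
  also have "\<dots> = (\<Sum>(m, n)\<in>T. falling_op psi_op m ((phi_b_op ^^ n) (swapP F (N - m - n))) z / (fact m * fact n))"
    by (rule sum.cong) (auto simp: T_def R_term_eq[OF G])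
  also have "\<dots> = (\<Sum>(j, n)\<in>Sigma {..N} (\<lambda>j. {..N - j}).
            falling_op psi_op (N - j - n) ((phi_b_op ^^ n) (swapP F j)) z / (fact (N - j - n) * fact n))"
    by (rule sum.reindex_bij_witness[where i = "\<lambda>(j, n). (N - j - n, n)" and j = "\<lambda>(m, n). (N - m - n, n)"])
       (auto simp: T_def)
  also have "\<dots> = (\<Sum>j\<le>N. \<Sum>n\<le>N - j.
            falling_op psi_op (N - j - n) ((phi_b_op ^^ n) (swapP F j)) z / (fact (N - j - n) * fact n))"
    by (simp add: sum.Sigma)
  finally show ?thesis .
qed

lemma r_op_eq_substU:
  assumes "F \<in> A2ser" shows "r_op F = substU F"
proof (intro ext)
  fix N z
  show "r_op F N z = substU F N z"
    unfolding r_op_coeff[OF assms] substU_def hcoeff_Umat[OF assms]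
    by (simp add: falling_op_flow_generator_expansion swapP_A2ser[OF assms])
qed

lemma r_op_coherent: "r_op (\<lambda>N. if N = 0 then coh v else (\<lambda>z. 0)) = cohU v"
proof (intro ext)
  fix N z
  let ?F = "\<lambda>N. if N = 0 then coh v else (\<lambda>z. 0)"
  have "coh v = exp_monomial 1 0 0 v" by (simp add: coh_def exp_monomial_def fun_eq_iff)
  hence "?F \<in> A2ser"
    by (simp add: A2ser_def A2_exp_monomial A2_zero)
  hence "r_op ?F N z = (\<Sum>j\<le>N. hcoeff (\<lambda>h. ?F j (transpose (Umat h) *v z)) (N - j))"
    by (simp add: r_op_eq_substU substU_def)
  also have "\<dots> = (\<Sum>j\<le>N. if j = 0 then hcoeff (\<lambda>h. coh v (transpose (Umat h) *v z)) N else 0)"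
  proof (rule sum.cong[OF refl])
    have "(deriv ^^ k) (\<lambda>h. 0::complex) = (\<lambda>h. 0)" for k
      by (induction k) simp_all
    thus "hcoeff (\<lambda>h. ?F j (transpose (Umat h) *v z)) (N - j) =
          (if j = 0 then hcoeff (\<lambda>h. coh v (transpose (Umat h) *v z)) N else 0)" for j
      by (simp add: hcoeff_def)
  qed
  also have "\<dots> = hcoeff (\<lambda>h. coh v (transpose (Umat h) *v z)) N"
    by simp
  also have "\<dots> = cohU v N z"
    unfolding cohU_def coh_def bil_transpose_mult ..
  finally show "r_op ?F N z = cohU v N z" .
qed

theorem mainTheorem6:
  fixes F :: hser and v :: "complex^2"
  assumes "F \<in> A2ser"
  shows "(\<forall>m n N. (N < m + n \<longrightarrow> R_term m n F N = (\<lambda>z. 0)) \<and> R_term m n F N \<in> A2)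
       \<and> r_op F = substU F
       \<and> r_op (\<lambda>N. if N = 0 then coh v else (\<lambda>z. 0)) = cohU v"
proof (intro conjI allI impI)
  fix m n N
  show "N < m + n \<Longrightarrow> R_term m n F N = (\<lambda>z. 0)"
    by (simp add: R_term_eq[OF assms])
  show "R_term m n F N \<in> A2"
    by (rule R_term_A2[OF assms])
qed (simp_all add: r_op_eq_substU[OF assms] r_op_coherent)

end
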